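(* Let $L\in\mathsf{NTIME}(t(n),p(n))$ and let $V$ be a time-$O(t(n))$ verifier for $L$ using size-$O(p(n))$ certificates. Then $\mathrm{Ldim}(\mathcal{C}_{L,V})=1$.
   Context: Here $t(n),p(n)\ge n$ are growth functions. $\mathsf{NTIME}(t,p)$: languages decided by a time-$O(t(n))$ verifier with size-$O(p(n))$ certificates. Fixed code: polynomial-time $\mathrm{Enc}:\{0,1\}^k\to\{0,1\}^{ck}$, $\mathrm{Dec}$, constants $c>1$, $\varepsilon^\star>0$. For $z\in\{0,1\}^n$, $\textsc{Cert}_z:\{0,1\}^{n+\log(cp(n))}\to\{0,1\}$ is constant $0$ if $z\notin L$; otherwise with $w^\star\in\{0,1\}^{p(n)}$ the lexicographically first certificate with $V(z,w^\star)=1$, $\textsc{Cert}_z(x)=\mathrm{Enc}(w^\star)_i$ if $x=(z,i)$ ($i$ read as an index in $\{1,\dots,cp(n)\}$), else $0$; $\mathcal{C}_{L,V}=\{\textsc{Cert}_z:z\in\{0,1\}^n\}$. $\mathrm{Ldim}(\mathcal{C})$ (Littlestone dimension) is the optimal worst-case number of mistakes of an online learner for $\mathcal{C}$ (each round: adversary presents $x$, learner predicts, true label $f(x)$ of a fixed target $f\in\mathcal{C}$ revealed). *)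

theory Defs
  imports Complex_Main "HOL-Library.Extended_Nat"
begin

definition bin_val :: "bool list \<Rightarrow> nat" where
  "bin_val xs = foldl (\<lambda>acc b. 2 * acc + (if b then 1 else 0)) 0 xs"

definition lex_less :: "bool list \<Rightarrow> bool list \<Rightarrow> bool" where
  "lex_less xs ys \<longleftrightarrow> (xs, ys) \<in> lexord {(False, True)}"

text \<open>V is a verifier for L with certificates of length exactly p(n), running
  in time O(t(n)); the running time is given by an abstract cost function timeV.\<close>
definition is_NTIME_verifier ::
  "bool list set \<Rightarrow> (bool list \<Rightarrow> bool list \<Rightarrow> bool) \<Rightarrow> (bool list \<Rightarrow> bool list \<Rightarrow> nat)
   \<Rightarrow> (nat \<Rightarrow> nat) \<Rightarrow> (nat \<Rightarrow> nat) \<Rightarrow> bool" where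
  "is_NTIME_verifier L V timeV t p \<longleftrightarrow>
     (\<forall>z. z \<in> L \<longleftrightarrow> (\<exists>w. length w = p (length z) \<and> V z w)) \<and>
     (\<exists>a::nat. \<forall>z w. length w = p (length z) \<longrightarrow> timeV z w \<le> a * t (length z) + a)"

definition poly_time :: "(bool list \<Rightarrow> nat) \<Rightarrow> bool" where
  "poly_time cost \<longleftrightarrow> (\<exists>k::nat. \<forall>x. cost x \<le> (length x + 1) ^ k)"

definition hamming :: "bool list \<Rightarrow> bool list \<Rightarrow> nat" where
  "hamming xs ys = card {i. i < length xs \<and> xs ! i \<noteq> ys ! i}"

definition is_code ::
  "(bool list \<Rightarrow> bool list) \<Rightarrow> (bool list \<Rightarrow> bool list) \<Rightarrow> (bool list \<Rightarrow> nat) \<Rightarrow> (bool list \<Rightarrow> nat)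
   \<Rightarrow> real \<Rightarrow> real \<Rightarrow> bool" where
  "is_code Enc Dec timeEnc timeDec c eps \<longleftrightarrow>
     c > 1 \<and> eps > 0 \<and>
     (\<forall>w. length (Enc w) = nat \<lceil>c * real (length w)\<rceil>) \<and>
     (\<forall>w y. length y = length (Enc w) \<and> real (hamming y (Enc w)) \<le> eps * real (length (Enc w))
            \<longrightarrow> Dec y = w) \<and>
     poly_time timeEnc \<and> poly_time timeDec"

definition idx_bits :: "real \<Rightarrow> (nat \<Rightarrow> nat) \<Rightarrow> nat \<Rightarrow> nat" where
  "idx_bits c p n = nat \<lceil>log 2 (c * real (p n))\<rceil>"

definition first_cert :: "(bool list \<Rightarrow> bool list \<Rightarrow> bool) \<Rightarrow> (nat \<Rightarrow> nat) \<Rightarrow> bool list \<Rightarrow> bool list" where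
  "first_cert V p z = (THE w. length w = p (length z) \<and> V z w \<and>
      (\<forall>w'. length w' = p (length z) \<and> V z w' \<longrightarrow> w = w' \<or> lex_less w w'))"

text \<open>Cert_z(x): x = (z', bits); the index i = value(bits)+1 in {1,...,|Enc w*|}.\<close>
definition Cert ::
  "bool list set \<Rightarrow> (bool list \<Rightarrow> bool list \<Rightarrow> bool) \<Rightarrow> (nat \<Rightarrow> nat) \<Rightarrow> (bool list \<Rightarrow> bool list)
   \<Rightarrow> real \<Rightarrow> bool list \<Rightarrow> bool list \<Rightarrow> bool" where
  "Cert L V p Enc c z x =
     (let n = length z; e = Enc (first_cert V p z); i = bin_val (drop n x) + 1 in
      if z \<in> L \<and> length x = n + idx_bits c p n \<and> take n x = z \<and> 1 \<le> i \<and> i \<le> length e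
      then e ! (i - 1) else False)"

definition Cert_class ::
  "bool list set \<Rightarrow> (bool list \<Rightarrow> bool list \<Rightarrow> bool) \<Rightarrow> (nat \<Rightarrow> nat) \<Rightarrow> (bool list \<Rightarrow> bool list)
   \<Rightarrow> real \<Rightarrow> nat \<Rightarrow> (bool list \<Rightarrow> bool) set" where
  "Cert_class L V p Enc c n = {Cert L V p Enc c z | z. length z = n}"

definition cert_domain :: "real \<Rightarrow> (nat \<Rightarrow> nat) \<Rightarrow> nat \<Rightarrow> bool list set" where
  "cert_domain c p n = {x. length x = n + idx_bits c p n}"

type_synonym 'a learner = "('a \<times> bool) list \<Rightarrow> 'a \<Rightarrow> bool"

definition mistakes :: "'a learner \<Rightarrow> ('a \<Rightarrow> bool) \<Rightarrow> 'a list \<Rightarrow> nat" where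
  "mistakes A f xs = card {i. i < length xs \<and>
       A (map (\<lambda>x. (x, f x)) (take i xs)) (xs ! i) \<noteq> f (xs ! i)}"

text \<open>Optimal worst-case number of mistakes (over targets in C and adversarial
  sequences of points of X); a (deterministic) adaptive adversary against a
  deterministic learner is equivalent to a fixed sequence.\<close>
definition Ldim :: "'a set \<Rightarrow> ('a \<Rightarrow> bool) set \<Rightarrow> enat" where
  "Ldim X C = (INF A :: 'a learner. SUP f\<in>C. SUP xs\<in>lists X. enat (mistakes A f xs))"

end

theory Submission
  imports Defs
begin

text \<open>\<open>Cert\<^sub>z\<close> vanishes outside the inputs with prefix \<open>z\<close>, so a single positive
  example \<open>x\<close> identifies the target as \<open>Cert\<^bsub>take n x\<^esub>\<close>. The learner that
  predicts \<open>0\<close> until it sees a positive example, and the identified concept afterwards,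
  errs at most once. Conversely, two distinct concepts disagree at some point, and an
  adversary presenting that point forces one mistake on every learner.\<close>

lemma Ldim_le_mistake_bound:
  assumes "\<And>f xs. f \<in> C \<Longrightarrow> xs \<in> lists X \<Longrightarrow> mistakes A f xs \<le> k"
  shows "Ldim X C \<le> enat k"
proof -
  have "Ldim X C \<le> (SUP f\<in>C. SUP xs\<in>lists X. enat (mistakes A f xs))"
    unfolding Ldim_def by (rule INF_lower) simp
  also have "\<dots> \<le> enat k"
    using assms by (intro SUP_least) simp
  finally show ?thesis .
qed

lemma mistakes_singleton:
  "mistakes A f [x] = (if A [] x = f x then 0 else 1)"
proof -
  have "{i. i < length [x] \<and> A (map (\<lambda>x. (x, f x)) (take i [x])) ([x] ! i) \<noteq> f ([x] ! i)}
      = (if A [] x = f x then {} else {0})"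
    by auto
  then show ?thesis
    unfolding mistakes_def by simp
qed

lemma Ldim_ge_1_if_disagree:
  assumes "f \<in> C" "g \<in> C" "x \<in> X" "f x \<noteq> g x"
  shows "1 \<le> Ldim X C"
  unfolding Ldim_def
proof (rule INF_greatest)
  fix A :: "'a learner"
  obtain h where h: "h \<in> C" "A [] x \<noteq> h x"
    using assms by (cases "A [] x = f x") auto
  have "1 \<le> (SUP xs\<in>lists X. enat (mistakes A h xs))"
    using h(2) \<open>x \<in> X\<close> by (intro SUP_upper2[of "[x]"]) (simp_all add: mistakes_singleton one_enat_def)
  then show "1 \<le> (SUP f\<in>C. SUP xs\<in>lists X. enat (mistakes A f xs))"
    using h(1) by (intro SUP_upper2[of h]) auto
qed

definition first_positive_learner :: "('a \<Rightarrow> 'a \<Rightarrow> bool) \<Rightarrow> 'a learner" where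
  "first_positive_learner concept_of h y =
     (case find snd h of None \<Rightarrow> False | Some (x, _) \<Rightarrow> concept_of x y)"

lemma first_positive_learner_mistake_is_first_positive:
  assumes identifies: "\<And>x. f x \<Longrightarrow> concept_of x = f"
    and mistake: "first_positive_learner concept_of (map (\<lambda>x. (x, f x)) (take i xs)) (xs ! i)
                    \<noteq> f (xs ! i)"
    and "i < length xs"
  shows "f (xs ! i) \<and> (\<forall>j<i. \<not> f (xs ! j))"
proof (cases "find snd (map (\<lambda>x. (x, f x)) (take i xs))")
  case None
  have "\<not> f (xs ! j)" if "j < i" for j
  proof -
    have "xs ! j \<in> set (take i xs)"
      using that \<open>i < length xs\<close> by (auto simp: in_set_conv_nth intro!: exI[of _ j])
    with None show ?thesis
      by (auto simp: find_None_iff)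
  qed
  with None mistake show ?thesis
    by (auto simp: first_positive_learner_def)
next
  case (Some q)
  then obtain x where "q = (x, True)" "f x"
    by (auto simp: find_Some_iff)
  with Some mistake identifies show ?thesis
    by (simp add: first_positive_learner_def)
qed

lemma first_positive_learner_mistakes_le_1:
  assumes "\<And>x. f x \<Longrightarrow> concept_of x = f"
  shows "mistakes (first_positive_learner concept_of) f xs \<le> 1"
proof -
  let ?mistake = "\<lambda>i. first_positive_learner concept_of (map (\<lambda>x. (x, f x)) (take i xs)) (xs ! i)
                        \<noteq> f (xs ! i)"
  let ?first_positive = "{i. i < length xs \<and> f (xs ! i) \<and> (\<forall>j<i. \<not> f (xs ! j))}"
  have "{i. i < length xs \<and> ?mistake i} \<subseteq> ?first_positive"
    using first_positive_learner_mistake_is_first_positive[of f concept_of] assms by blast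
  then have "card {i. i < length xs \<and> ?mistake i} \<le> card ?first_positive"
    by (intro card_mono) simp_all
  also have "\<dots> \<le> 1"
    using card_le_Suc0_iff_eq[of ?first_positive] by (auto intro: linorder_neqE_nat)
  finally show ?thesis
    unfolding mistakes_def .
qed

lemma Cert_class_positive_identifies:
  assumes "f \<in> Cert_class L V p Enc c n" "f x"
  shows "Cert L V p Enc c (take n x) = f"
proof -
  obtain z where z: "f = Cert L V p Enc c z" "length z = n"
    using assms(1) unfolding Cert_class_def by blast
  with assms(2) have "take n x = z"
    unfolding Cert_def Let_def by (auto split: if_splits)
  with z show ?thesis by simp
qed

lemma Cert_class_positive_in_domain:
  assumes "f \<in> Cert_class L V p Enc c n" "f x"
  shows "x \<in> cert_domain c p n"
  using assms unfolding Cert_class_def cert_domain_def Cert_def Let_def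
  by (auto split: if_splits)

theorem claim25:
  fixes L :: "bool list set" and V :: "bool list \<Rightarrow> bool list \<Rightarrow> bool"
    and timeV :: "bool list \<Rightarrow> bool list \<Rightarrow> nat" and t p :: "nat \<Rightarrow> nat"
    and Enc Dec :: "bool list \<Rightarrow> bool list" and timeEnc timeDec :: "bool list \<Rightarrow> nat"
    and c eps :: real and n :: nat
  assumes "\<forall>m. t m \<ge> m" and "\<forall>m. p m \<ge> m"
    and "is_code Enc Dec timeEnc timeDec c eps"
    and "is_NTIME_verifier L V timeV t p"
  shows "Ldim (cert_domain c p n) (Cert_class L V p Enc c n) \<le> 1 \<and>
         ((\<exists>f\<in>Cert_class L V p Enc c n. \<exists>g\<in>Cert_class L V p Enc c n. f \<noteq> g)
            \<longrightarrow> Ldim (cert_domain c p n) (Cert_class L V p Enc c n) = 1)"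
proof -
  let ?C = "Cert_class L V p Enc c n" and ?X = "cert_domain c p n"
  let ?concept_of = "\<lambda>x. Cert L V p Enc c (take n x)"
  have "mistakes (first_positive_learner ?concept_of) f xs \<le> 1" if "f \<in> ?C" for f xs
    using that by (intro first_positive_learner_mistakes_le_1 Cert_class_positive_identifies)
  then have "Ldim ?X ?C \<le> enat 1"
    by (rule Ldim_le_mistake_bound)
  then have "Ldim ?X ?C \<le> 1"
    by (simp add: one_enat_def)
  moreover have "1 \<le> Ldim ?X ?C" if "f \<in> ?C" "g \<in> ?C" "f \<noteq> g" for f g
  proof -
    obtain x where x: "f x \<noteq> g x"
      using \<open>f \<noteq> g\<close> by blast
    then have "x \<in> ?X"
      using that(1,2) by (cases "f x") (auto intro: Cert_class_positive_in_domain)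
    then show ?thesis
      by (rule Ldim_ge_1_if_disagree[OF that(1,2) _ x])
  qed
  ultimately show ?thesis
    by (auto intro: order_antisym)
qed

end
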